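(* Suppose $m>1$. Then the criteria $\rho_1,\dots,\rho_5$ are continuous in both arguments almost everywhere on $\mathcal{P}\times\mathcal{P}$, and the criterion $\rho_3$ is continuous on $\mathcal{P}\times\mathcal{P}$, where $\rho_1(X,Y)=\frac{m_{11}}{m_{11}+m_{10}}$ (Wallace I), $\rho_2(X,Y)=\frac{m_{11}}{m_{11}+m_{01}}$ (Wallace II), $\rho_3(X,Y)=\frac{m_{11}+m_{00}}{N}$ (Rand), $\rho_4(X,Y)=\frac{m_{11}}{\sqrt{(m_{11}+m_{10})(m_{11}+m_{01})}}$ (Fowlkes–Mallows), $\rho_5(X,Y)=\frac{m_{11}}{m_{11}+m_{10}+m_{01}}$ (Jaccard).
   Context: Let $\mathcal{Z}=\{z_1,\dots,z_m\}$, $1\le\ell\le m$, $\mathcal{X} = \{\mathbf{X}\in[0,1]^{\ell\times m} : \mathbf{X}^T\mathbf{1}_\ell = \mathbf{1}_m\}$, and $\mathcal{P}=\mathcal{X}/\Pi$ the set of orbits of $\mathcal{X}$ under left multiplication by $\ell\times\ell$ permutation matrices, with metric $\delta_2(X,Y)=\min\{\|\mathbf{X}-\mathbf{Y}\|_2:\mathbf{X}\in X,\mathbf{Y}\in Y\}$ (Frobenius norm); continuity is with respect to $\delta_2$. For $X\in\mathcal{P}$, $\mathbf{C}_X=\mathbf{X}^T\mathbf{X}$ for any representative $\mathbf{X}\in X$. For $m\times m$ matrices, $\chi(\mathbf{A},\mathbf{B})=\sum_{r<s}a_{rs}b_{rs}$; $\mathbf{1}$ is the $m\times m$ all-ones matrix.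 Set $m_{11}=\chi(\mathbf{C}_X,\mathbf{C}_Y)$, $m_{10}=\chi(\mathbf{C}_X,\mathbf{1}-\mathbf{C}_Y)$, $m_{01}=\chi(\mathbf{1}-\mathbf{C}_X,\mathbf{C}_Y)$, $m_{00}=\chi(\mathbf{1}-\mathbf{C}_X,\mathbf{1}-\mathbf{C}_Y)$, and $N=m(m-1)/2$. *)

theory Defs
  imports "HOL-Probability.Probability"
begin

text \<open>Matrices are functions nat => nat => real; an l x m matrix uses the
indices i < l (rows), j < m (columns) and is 0 elsewhere.\<close>

definition Xset :: "nat \<Rightarrow> nat \<Rightarrow> (nat \<Rightarrow> nat \<Rightarrow> real) set" where
  "Xset l m = {X. (\<forall>i j. i < l \<and> j < m \<longrightarrow> 0 \<le> X i j \<and> X i j \<le> 1)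
                 \<and> (\<forall>j < m. (\<Sum>i<l. X i j) = 1)
                 \<and> (\<forall>i j. \<not> (i < l \<and> j < m) \<longrightarrow> X i j = 0)}"

definition orbit :: "nat \<Rightarrow> (nat \<Rightarrow> nat \<Rightarrow> real) \<Rightarrow> (nat \<Rightarrow> nat \<Rightarrow> real) set" where
  "orbit l X = {(\<lambda>i j. X (\<sigma> i) j) | \<sigma>. \<sigma> permutes {..<l}}"

definition Pset :: "nat \<Rightarrow> nat \<Rightarrow> (nat \<Rightarrow> nat \<Rightarrow> real) set set" where
  "Pset l m = orbit l ` Xset l m"

definition frob :: "nat \<Rightarrow> nat \<Rightarrow> (nat \<Rightarrow> nat \<Rightarrow> real) \<Rightarrow> (nat \<Rightarrow> nat \<Rightarrow> real) \<Rightarrow> real" where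
  "frob l m X Y = sqrt (\<Sum>i<l. \<Sum>j<m. (X i j - Y i j)\<^sup>2)"

definition delta2 :: "nat \<Rightarrow> nat \<Rightarrow> (nat \<Rightarrow> nat \<Rightarrow> real) set \<Rightarrow> (nat \<Rightarrow> nat \<Rightarrow> real) set \<Rightarrow> real" where
  "delta2 l m A B = Min {frob l m X Y | X Y. X \<in> A \<and> Y \<in> B}"

text \<open>C_X = X^T X for any representative of the orbit.\<close>
definition Cmat :: "nat \<Rightarrow> (nat \<Rightarrow> nat \<Rightarrow> real) set \<Rightarrow> nat \<Rightarrow> nat \<Rightarrow> real" where
  "Cmat l A = (let X = (SOME X. X \<in> A) in (\<lambda>r s. \<Sum>i<l. X i r * X i s))"

definition chi :: "nat \<Rightarrow> (nat \<Rightarrow> nat \<Rightarrow> real) \<Rightarrow> (nat \<Rightarrow> nat \<Rightarrow> real) \<Rightarrow> real" where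
  "chi m A B = (\<Sum>r<m. \<Sum>s\<in>{r<..<m}. A r s * B r s)"

definition compl1 :: "(nat \<Rightarrow> nat \<Rightarrow> real) \<Rightarrow> nat \<Rightarrow> nat \<Rightarrow> real" where
  "compl1 C = (\<lambda>r s. 1 - C r s)"

definition m11 where "m11 l m A B = chi m (Cmat l A) (Cmat l B)"
definition m10 where "m10 l m A B = chi m (Cmat l A) (compl1 (Cmat l B))"
definition m01 where "m01 l m A B = chi m (compl1 (Cmat l A)) (Cmat l B)"
definition m00 where "m00 l m A B = chi m (compl1 (Cmat l A)) (compl1 (Cmat l B))"

definition Npairs :: "nat \<Rightarrow> real" where "Npairs m = real m * (real m - 1) / 2"

definition rho1 where "rho1 l m A B = m11 l m A B / (m11 l m A B + m10 l m A B)"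
definition rho2 where "rho2 l m A B = m11 l m A B / (m11 l m A B + m01 l m A B)"
definition rho3 where "rho3 l m A B = (m11 l m A B + m00 l m A B) / Npairs m"
definition rho4 where "rho4 l m A B =
   m11 l m A B / sqrt ((m11 l m A B + m10 l m A B) * (m11 l m A B + m01 l m A B))"
definition rho5 where "rho5 l m A B = m11 l m A B / (m11 l m A B + m10 l m A B + m01 l m A B)"

definition cont_at_PP ::
  "nat \<Rightarrow> nat \<Rightarrow> ((nat \<Rightarrow> nat \<Rightarrow> real) set \<Rightarrow> (nat \<Rightarrow> nat \<Rightarrow> real) set \<Rightarrow> real)
   \<Rightarrow> (nat \<Rightarrow> nat \<Rightarrow> real) set \<Rightarrow> (nat \<Rightarrow> nat \<Rightarrow> real) set \<Rightarrow> bool" where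
  "cont_at_PP l m f A B \<longleftrightarrow> (\<forall>e>0. \<exists>d>0. \<forall>A'\<in>Pset l m. \<forall>B'\<in>Pset l m.
      delta2 l m A A' < d \<and> delta2 l m B B' < d \<longrightarrow> \<bar>f A' B' - f A B\<bar> < e)"

text \<open>Lebesgue measure on the free coordinates of X (rows 0..l-2); the last row
is determined by the column-sum constraint.\<close>
definition PM :: "nat \<Rightarrow> nat \<Rightarrow> (nat \<times> nat \<Rightarrow> real) measure" where
  "PM l m = PiM ({..<l-1} \<times> {..<m}) (\<lambda>_. lborel)"

definition lift :: "nat \<Rightarrow> nat \<Rightarrow> (nat \<times> nat \<Rightarrow> real) \<Rightarrow> nat \<Rightarrow> nat \<Rightarrow> real" where
  "lift l m p = (\<lambda>i j. if i < l - 1 \<and> j < m then p (i, j)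
                        else if i = l - 1 \<and> j < m then 1 - (\<Sum>k<l-1. p (k, j)) else 0)"

definition ae_cont_PP where
  "ae_cont_PP l m f \<longleftrightarrow> (AE z in PM l m \<Otimes>\<^sub>M PM l m.
      lift l m (fst z) \<in> Xset l m \<and> lift l m (snd z) \<in> Xset l m \<longrightarrow>
      cont_at_PP l m f (orbit l (lift l m (fst z))) (orbit l (lift l m (snd z))))"

end

theory Submission
  imports Defs
begin

text \<open>All five criteria are rational functions (with a square root for Fowlkes--Mallows) of the
pair counts, which are polynomials in the entries of the Gram matrices \<open>C_X = X\<^sup>T X\<close>; these are
invariant under row permutation and Lipschitz in \<open>\<delta>\<^sub>2\<close>. So every criterion is continuous wherever
its denominator is nonzero. Rand has the constant denominator \<open>N > 0\<close>. For the others, the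
denominators are bounded below by \<open>X\<^sub>0\<^sub>0 X\<^sub>0\<^sub>1\<close> and \<open>Y\<^sub>0\<^sub>0 Y\<^sub>0\<^sub>1\<close>, and the pairs where one of these
entries vanishes lie in a union of coordinate hyperplanes, a null set.\<close>

subsection \<open>Degenerate pairs form a null set\<close>

lemma PiM_lborel_coordinate_null:
  assumes "finite I" "k \<in> I"
  shows "{p \<in> space (PiM I (\<lambda>_. lborel)). p k = (0::real)} \<in> null_sets (PiM I (\<lambda>_. lborel))"
proof -
  interpret product_sigma_finite "\<lambda>_::'i. (lborel::real measure)"
    by (simp add: product_sigma_finite_def lborel.sigma_finite_measure_axioms)
  let ?A = "\<lambda>i. if i = k then {0::real} else UNIV"
  have eq: "{p \<in> space (PiM I (\<lambda>_. lborel)). p k = 0} = Pi\<^sub>E I ?A"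
    using assms by (auto simp: space_PiM PiE_def Pi_def)
  have "emeasure (PiM I (\<lambda>_. lborel)) (Pi\<^sub>E I ?A) = (\<Prod>i\<in>I. emeasure lborel (?A i))"
    by (rule emeasure_PiM) (auto simp: assms)
  also have "\<dots> = 0"
    using assms by (intro prod_zero) (auto intro!: bexI[of _ k])
  moreover have "Pi\<^sub>E I ?A \<in> sets (PiM I (\<lambda>_. lborel))"
    by (rule sets_PiM_I_finite) (auto simp: assms)
  ultimately show ?thesis
    unfolding eq by (auto simp: null_sets_def)
qed

lemma sigma_finite_PM: "sigma_finite_measure (PM l m)"
  unfolding PM_def
  by (rule product_sigma_finite.sigma_finite)
     (auto simp: product_sigma_finite_def lborel.sigma_finite_measure_axioms)

lemma ae_cont_PP_if_first_row_nonzero: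
  assumes l: "1 \<le> l" and m: "1 < m"
    and cont: "\<And>X Y. X \<in> Xset l m \<Longrightarrow> Y \<in> Xset l m \<Longrightarrow> X 0 0 \<noteq> 0 \<Longrightarrow> X 0 1 \<noteq> 0 \<Longrightarrow>
      Y 0 0 \<noteq> 0 \<Longrightarrow> Y 0 1 \<noteq> 0 \<Longrightarrow> cont_at_PP l m f (orbit l X) (orbit l Y)"
  shows "ae_cont_PP l m f"
proof (cases "l = 1")
  case True
  \<comment> \<open>With a single row every entry of a matrix in \<open>Xset\<close> equals 1, so the claim holds everywhere.\<close>
  then have one: "X 0 j = 1" if "X \<in> Xset l m" "j < m" for X j
    using that by (auto simp: Xset_def)
  show ?thesis
    unfolding ae_cont_PP_def using m by (intro AE_I2 impI cont) (auto simp: one)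
next
  case False
  then have l1: "0 < l - 1" using l by auto
  interpret sigma_finite_measure "PM l m" by (rule sigma_finite_PM)
  let ?M = "PM l m"
  let ?Z = "\<lambda>k. {p \<in> space ?M. p k = 0}"
  let ?N = "(?Z (0,0) \<times> space ?M \<union> ?Z (0,1) \<times> space ?M) \<union>
            (space ?M \<times> ?Z (0,0) \<union> space ?M \<times> ?Z (0,1))"
  have "?Z (0,0) \<in> null_sets ?M" "?Z (0,1) \<in> null_sets ?M"
    using l1 m unfolding PM_def by (auto intro!: PiM_lborel_coordinate_null)
  then have N: "?N \<in> null_sets (?M \<Otimes>\<^sub>M ?M)"
    by (intro null_sets.Un times_in_null_sets1 times_in_null_sets2) auto
  have lift_first_row: "lift l m p 0 j = p (0, j)" if "j < m" for p j
    using that l1 by (simp add: lift_def)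
  show ?thesis
    unfolding ae_cont_PP_def
  proof (rule AE_I'[OF N], rule subsetI)
    fix z
    assume z: "z \<in> {z \<in> space (?M \<Otimes>\<^sub>M ?M). \<not> (lift l m (fst z) \<in> Xset l m \<and>
      lift l m (snd z) \<in> Xset l m \<longrightarrow> cont_at_PP l m f (orbit l (lift l m (fst z))) (orbit l (lift l m (snd z))))}"
    obtain a b where ab: "z = (a, b)" by (cases z)
    with z have "lift l m a \<in> Xset l m" "lift l m b \<in> Xset l m"
      "\<not> cont_at_PP l m f (orbit l (lift l m a)) (orbit l (lift l m b))"
      by auto
    then have "a (0,0) = 0 \<or> a (0,1) = 0 \<or> b (0,0) = 0 \<or> b (0,1) = 0"
      using cont[of "lift l m a" "lift l m b"] lift_first_row m by auto
    moreover have "a \<in> space ?M" "b \<in> space ?M"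
      using z ab by (auto simp: space_pair_measure)
    ultimately show "z \<in> ?N"
      using ab by auto
  qed
qed

subsection \<open>Orbits and Gram matrices\<close>

definition gram :: "nat \<Rightarrow> (nat \<Rightarrow> nat \<Rightarrow> real) \<Rightarrow> nat \<Rightarrow> nat \<Rightarrow> real" where
  "gram l X = (\<lambda>r s. \<Sum>i<l. X i r * X i s)"

lemma orbit_self: "X \<in> orbit l X"
  unfolding orbit_def by (auto intro!: exI[of _ id] permutes_id)

lemma finite_orbit: "finite (orbit l X)"
proof -
  have "orbit l X = (\<lambda>\<sigma> i j. X (\<sigma> i) j) ` {\<sigma>. \<sigma> permutes {..<l}}"
    unfolding orbit_def by auto
  then show ?thesis
    using finite_permutations[of "{..<l}"] by simp
qed

lemma orbit_subset_Xset:
  assumes X: "X \<in> Xset l m"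
  shows "orbit l X \<subseteq> Xset l m"
proof
  fix Y assume "Y \<in> orbit l X"
  then obtain \<sigma> where \<sigma>: "\<sigma> permutes {..<l}" and Y: "Y = (\<lambda>i j. X (\<sigma> i) j)"
    by (auto simp: orbit_def)
  have "\<sigma> i < l \<longleftrightarrow> i < l" for i
    using permutes_in_image[OF \<sigma>] by auto
  moreover have "\<not> i < l \<Longrightarrow> \<sigma> i = i" for i
    using \<sigma> by (auto simp: permutes_def)
  moreover have "(\<Sum>i<l. X (\<sigma> i) j) = (\<Sum>i<l. X i j)" for j
    using sum.permute[OF \<sigma>, of "\<lambda>i. X i j"] by (simp add: comp_def)
  ultimately show "Y \<in> Xset l m"
    using X unfolding Y Xset_def by auto
qed

lemma gram_orbit:
  assumes "Y \<in> orbit l X"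
  shows "gram l Y = gram l X"
proof -
  obtain \<sigma> where \<sigma>: "\<sigma> permutes {..<l}" and Y: "Y = (\<lambda>i j. X (\<sigma> i) j)"
    using assms by (auto simp: orbit_def)
  have "(\<Sum>i<l. X (\<sigma> i) r * X (\<sigma> i) s) = (\<Sum>i<l. X i r * X i s)" for r s
    using sum.permute[OF \<sigma>, of "\<lambda>i. X i r * X i s"] by (simp add: comp_def)
  then show ?thesis
    unfolding gram_def Y by simp
qed

lemma Cmat_eq_gram:
  assumes "X \<in> A" and "A = orbit l X'"
  shows "Cmat l A = gram l X"
proof -
  have "(SOME Y. Y \<in> A) \<in> A"
    using assms(1) some_in_eq by blast
  then have "gram l (SOME Y. Y \<in> A) = gram l X"
    using assms gram_orbit by metis
  then show ?thesis
    unfolding Cmat_def Let_def gram_def .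
qed

lemma Cmat_orbit: "Cmat l (orbit l X) = gram l X"
  using orbit_self by (rule Cmat_eq_gram) simp

lemma Xset_entry_bounds: "X \<in> Xset l m \<Longrightarrow> i < l \<Longrightarrow> 0 \<le> X i j \<and> X i j \<le> 1"
  unfolding Xset_def by (cases "j < m") auto

lemma gram_nonneg: "X \<in> Xset l m \<Longrightarrow> 0 \<le> gram l X r s"
  unfolding gram_def by (intro sum_nonneg) (simp add: Xset_entry_bounds)

lemma gram_le_1:
  assumes X: "X \<in> Xset l m" and r: "r < m"
  shows "gram l X r s \<le> 1"
proof -
  have "gram l X r s \<le> (\<Sum>i<l. X i r)"
    unfolding gram_def using Xset_entry_bounds[OF X]
    by (intro sum_mono) (simp add: mult_right_le_one_le)
  also have "\<dots> = 1"
    using X r by (simp add: Xset_def)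
  finally show ?thesis .
qed

lemma gram_first_row_le:
  assumes "1 \<le> l" and X: "X \<in> Xset l m"
  shows "X 0 r * X 0 s \<le> gram l X r s"
  unfolding gram_def using assms Xset_entry_bounds[OF X]
  by (intro member_le_sum[where f = "\<lambda>i. X i r * X i s"]) auto

subsection \<open>The Gram matrix is Lipschitz with respect to \<open>\<delta>\<^sub>2\<close>\<close>

lemma abs_entry_le_frob:
  assumes "i < l" "j < m"
  shows "\<bar>X i j - Y i j\<bar> \<le> frob l m X Y"
proof -
  have "(X i j - Y i j)\<^sup>2 \<le> (\<Sum>j<m. (X i j - Y i j)\<^sup>2)"
    using assms by (intro member_le_sum) auto
  also have "\<dots> \<le> (\<Sum>i<l. \<Sum>j<m. (X i j - Y i j)\<^sup>2)"
    using assms by (intro member_le_sum[where f = "\<lambda>i. \<Sum>j<m. (X i j - Y i j)\<^sup>2"] sum_nonneg) auto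
  finally have "sqrt ((X i j - Y i j)\<^sup>2) \<le> sqrt (\<Sum>i<l. \<Sum>j<m. (X i j - Y i j)\<^sup>2)"
    by (intro real_sqrt_le_mono)
  then show ?thesis
    unfolding frob_def real_sqrt_abs .
qed

lemma abs_mult_diff_le_unit_interval:
  fixes a b c e d :: real
  assumes "0 \<le> a" "a \<le> 1" "0 \<le> e" "e \<le> 1" "\<bar>a - c\<bar> \<le> d" "\<bar>b - e\<bar> \<le> d"
  shows "\<bar>a * b - c * e\<bar> \<le> 2 * d"
proof -
  have "\<bar>a * b - c * e\<bar> = \<bar>a * (b - e) + e * (a - c)\<bar>"
    by (simp add: algebra_simps)
  also have "\<dots> \<le> \<bar>a\<bar> * \<bar>b - e\<bar> + \<bar>e\<bar> * \<bar>a - c\<bar>"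
    unfolding abs_mult[symmetric] by (rule abs_triangle_ineq)
  also have "\<dots> = a * \<bar>b - e\<bar> + e * \<bar>a - c\<bar>"
    using assms by simp
  also have "\<dots> \<le> \<bar>b - e\<bar> + \<bar>a - c\<bar>"
    using assms by (intro add_mono mult_left_le_one_le) auto
  finally show ?thesis
    using assms by linarith
qed

lemma gram_diff_le_frob:
  assumes X: "X \<in> Xset l m" and Y: "Y \<in> Xset l m" and d: "frob l m X Y \<le> d"
  shows "\<bar>gram l X r s - gram l Y r s\<bar> \<le> 2 * real l * d"
proof -
  have entry: "\<bar>X i j - Y i j\<bar> \<le> d" if "i < l" for i j
  proof (cases "j < m")
    case True
    then show ?thesis
      using abs_entry_le_frob[OF that True, of X Y] d by linarith
  next
    case False
    have "0 \<le> frob l m X Y"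
      unfolding frob_def by (auto intro!: sum_nonneg)
    then show ?thesis
      using False X Y d by (auto simp: Xset_def)
  qed
  have "\<bar>gram l X r s - gram l Y r s\<bar> = \<bar>\<Sum>i<l. X i r * X i s - Y i r * Y i s\<bar>"
    unfolding gram_def by (simp add: sum_subtractf)
  also have "\<dots> \<le> (\<Sum>i<l. \<bar>X i r * X i s - Y i r * Y i s\<bar>)"
    by (rule sum_abs)
  also have "\<dots> \<le> (\<Sum>i<l. 2 * d)"
    using Xset_entry_bounds[OF X] Xset_entry_bounds[OF Y] entry
    by (intro sum_mono abs_mult_diff_le_unit_interval) auto
  finally show ?thesis
    by simp
qed

lemma delta2_attained:
  assumes "finite A" "finite B" "A \<noteq> {}" "B \<noteq> {}"
  shows "\<exists>X\<in>A. \<exists>Y\<in>B. delta2 l m A B = frob l m X Y"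
proof -
  have eq: "{frob l m X Y | X Y. X \<in> A \<and> Y \<in> B} = (\<lambda>(X, Y). frob l m X Y) ` (A \<times> B)"
    by auto
  have "delta2 l m A B \<in> (\<lambda>(X, Y). frob l m X Y) ` (A \<times> B)"
    unfolding delta2_def eq using assms by (intro Min_in) auto
  then show ?thesis
    by auto
qed

lemma Cmat_diff_le_delta2:
  assumes A: "A \<in> Pset l m" and A': "A' \<in> Pset l m" and d: "delta2 l m A A' < d"
  shows "\<bar>Cmat l A' r s - Cmat l A r s\<bar> \<le> 2 * real l * d"
proof -
  obtain X where X: "X \<in> Xset l m" "A = orbit l X"
    using A by (auto simp: Pset_def)
  obtain X' where X': "X' \<in> Xset l m" "A' = orbit l X'"
    using A' by (auto simp: Pset_def)
  obtain Y Y' where Y: "Y \<in> A" and Y': "Y' \<in> A'" and eq: "delta2 l m A A' = frob l m Y Y'"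
    using delta2_attained[of A A' l m] X X' finite_orbit orbit_self by blast
  have "Cmat l A = gram l Y" "Cmat l A' = gram l Y'"
    using Cmat_eq_gram X X' Y Y' by auto
  moreover have "\<bar>gram l Y r s - gram l Y' r s\<bar> \<le> 2 * real l * d"
    using X X' Y Y' eq d orbit_subset_Xset by (intro gram_diff_le_frob) auto
  ultimately show ?thesis
    by (simp add: abs_minus_commute)
qed

text \<open>Neighbourhood filter of \<open>(A, B)\<close> in \<open>\<P> \<times> \<P>\<close> for the product of the \<open>\<delta>\<^sub>2\<close> topologies, so that
\<open>cont_at_PP\<close> becomes an ordinary filter limit.\<close>

definition nhds_PP ::
  "nat \<Rightarrow> nat \<Rightarrow> (nat \<Rightarrow> nat \<Rightarrow> real) set \<Rightarrow> (nat \<Rightarrow> nat \<Rightarrow> real) set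
   \<Rightarrow> ((nat \<Rightarrow> nat \<Rightarrow> real) set \<times> (nat \<Rightarrow> nat \<Rightarrow> real) set) filter" where
  "nhds_PP l m A B = (INF d\<in>{0::real<..}. principal {p. fst p \<in> Pset l m \<and> snd p \<in> Pset l m \<and>
      delta2 l m A (fst p) < d \<and> delta2 l m B (snd p) < d})"

lemma eventually_nhds_PP:
  "eventually P (nhds_PP l m A B) \<longleftrightarrow> (\<exists>d>0. \<forall>p. fst p \<in> Pset l m \<and> snd p \<in> Pset l m \<and>
      delta2 l m A (fst p) < d \<and> delta2 l m B (snd p) < d \<longrightarrow> P p)"
proof -
  define U where "U d = {p. fst p \<in> Pset l m \<and> snd p \<in> Pset l m \<and>
      delta2 l m A (fst p) < d \<and> delta2 l m B (snd p) < d}" for d :: real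
  have "eventually P (INF d\<in>{0<..}. principal (U d)) \<longleftrightarrow> (\<exists>d\<in>{0<..}. eventually P (principal (U d)))"
  proof (rule eventually_INF_base)
    fix a b :: real
    assume "a \<in> {0<..}" "b \<in> {0<..}"
    moreover have "U (min a b) \<subseteq> U a \<inter> U b"
      by (auto simp: U_def)
    ultimately show "\<exists>c\<in>{0<..}. principal (U c) \<le> inf (principal (U a)) (principal (U b))"
      by (intro bexI[of _ "min a b"]) (auto simp: inf_principal)
  qed simp
  then show ?thesis
    unfolding nhds_PP_def U_def by (auto simp: eventually_principal)
qed

lemma eventually_nhds_PP_delta2:
  assumes "d > 0"
  shows "eventually (\<lambda>p. fst p \<in> Pset l m \<and> delta2 l m A (fst p) < d) (nhds_PP l m A B)"
    and "eventually (\<lambda>p. snd p \<in> Pset l m \<and> delta2 l m B (snd p) < d) (nhds_PP l m A B)"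
  using assms unfolding eventually_nhds_PP by blast+

lemma cont_at_PP_if_tendsto:
  assumes "((\<lambda>p. f (fst p) (snd p)) \<longlongrightarrow> f A B) (nhds_PP l m A B)"
  shows "cont_at_PP l m f A B"
  unfolding cont_at_PP_def
proof (intro allI impI)
  fix e :: real
  assume "e > 0"
  with assms have "eventually (\<lambda>p. dist (f (fst p) (snd p)) (f A B) < e) (nhds_PP l m A B)"
    by (rule tendstoD)
  then obtain d where "d > 0" and close: "\<And>p. fst p \<in> Pset l m \<and> snd p \<in> Pset l m \<and>
      delta2 l m A (fst p) < d \<and> delta2 l m B (snd p) < d \<Longrightarrow> dist (f (fst p) (snd p)) (f A B) < e"
    unfolding eventually_nhds_PP by blast
  show "\<exists>d>0. \<forall>A'\<in>Pset l m. \<forall>B'\<in>Pset l m.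
      delta2 l m A A' < d \<and> delta2 l m B B' < d \<longrightarrow> \<bar>f A' B' - f A B\<bar> < e"
    using \<open>d > 0\<close> close[of "(_, _)"] by (auto simp: dist_real_def)
qed

lemma tendsto_Cmat:
  assumes A: "A \<in> Pset l m"
    and close: "\<And>d. d > 0 \<Longrightarrow> eventually (\<lambda>x. g x \<in> Pset l m \<and> delta2 l m A (g x) < d) F"
  shows "((\<lambda>x. Cmat l (g x) r s) \<longlongrightarrow> Cmat l A r s) F"
proof (rule tendstoI)
  fix e :: real
  assume "e > 0"
  define d where "d = e / (2 * real l + 1)"
  have "d > 0" "2 * real l * d < e"
    using \<open>e > 0\<close> by (auto simp: d_def field_simps)
  show "eventually (\<lambda>x. dist (Cmat l (g x) r s) (Cmat l A r s) < e) F"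
    using close[OF \<open>d > 0\<close>]
  proof (rule eventually_mono)
    fix x
    assume "g x \<in> Pset l m \<and> delta2 l m A (g x) < d"
    then have "\<bar>Cmat l (g x) r s - Cmat l A r s\<bar> \<le> 2 * real l * d"
      using A by (intro Cmat_diff_le_delta2) auto
    then show "dist (Cmat l (g x) r s) (Cmat l A r s) < e"
      using \<open>2 * real l * d < e\<close> by (simp add: dist_real_def)
  qed
qed

lemma
  assumes A: "A \<in> Pset l m" and B: "B \<in> Pset l m"
  shows tendsto_Cmat_fst_nhds_PP: "((\<lambda>p. Cmat l (fst p) r s) \<longlongrightarrow> Cmat l A r s) (nhds_PP l m A B)"
    and tendsto_Cmat_snd_nhds_PP: "((\<lambda>p. Cmat l (snd p) r s) \<longlongrightarrow> Cmat l B r s) (nhds_PP l m A B)"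
proof -
  show "((\<lambda>p. Cmat l (fst p) r s) \<longlongrightarrow> Cmat l A r s) (nhds_PP l m A B)"
    using A by (rule tendsto_Cmat) (rule eventually_nhds_PP_delta2)
  show "((\<lambda>p. Cmat l (snd p) r s) \<longlongrightarrow> Cmat l B r s) (nhds_PP l m A B)"
    using B by (rule tendsto_Cmat) (rule eventually_nhds_PP_delta2)
qed

lemma
  assumes "A \<in> Pset l m" and "B \<in> Pset l m"
  shows tendsto_m11: "((\<lambda>p. m11 l m (fst p) (snd p)) \<longlongrightarrow> m11 l m A B) (nhds_PP l m A B)"
    and tendsto_m10: "((\<lambda>p. m10 l m (fst p) (snd p)) \<longlongrightarrow> m10 l m A B) (nhds_PP l m A B)"
    and tendsto_m01: "((\<lambda>p. m01 l m (fst p) (snd p)) \<longlongrightarrow> m01 l m A B) (nhds_PP l m A B)"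
    and tendsto_m00: "((\<lambda>p. m00 l m (fst p) (snd p)) \<longlongrightarrow> m00 l m A B) (nhds_PP l m A B)"
  unfolding m11_def m10_def m01_def m00_def chi_def compl1_def
  by (intro tendsto_sum tendsto_mult tendsto_diff tendsto_const
      tendsto_Cmat_fst_nhds_PP tendsto_Cmat_snd_nhds_PP assms)+

lemma m11_plus_m10: "m11 l m A B + m10 l m A B = (\<Sum>r<m. \<Sum>s\<in>{r<..<m}. Cmat l A r s)"
  unfolding m11_def m10_def chi_def compl1_def
  by (simp add: sum.distrib[symmetric] ring_distribs)

lemma m11_plus_m01: "m11 l m A B + m01 l m A B = (\<Sum>r<m. \<Sum>s\<in>{r<..<m}. Cmat l B r s)"
  unfolding m11_def m01_def chi_def compl1_def
  by (simp add: sum.distrib[symmetric] ring_distribs)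

lemma m01_nonneg:
  assumes "A \<in> Pset l m" and "B \<in> Pset l m"
  shows "0 \<le> m01 l m A B"
proof -
  obtain X Y where X: "X \<in> Xset l m" "A = orbit l X" and Y: "Y \<in> Xset l m" "B = orbit l Y"
    using assms by (auto simp: Pset_def)
  show ?thesis
    unfolding m01_def chi_def compl1_def X Y Cmat_orbit
    using gram_le_1[OF X(1)] gram_nonneg[OF Y(1)]
    by (intro sum_nonneg mult_nonneg_nonneg) auto
qed

lemma upper_pair_sum_gram_pos:
  assumes "1 \<le> l" "1 < m" and X: "X \<in> Xset l m" and "X 0 0 \<noteq> 0" "X 0 1 \<noteq> 0"
  shows "0 < (\<Sum>r<m. \<Sum>s\<in>{r<..<m}. gram l X r s)"
proof -
  have "0 < X 0 0" "0 < X 0 1"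
    using assms Xset_entry_bounds[OF X, of 0] by (simp_all add: less_le)
  then have "0 < X 0 0 * X 0 1"
    by simp
  also have "\<dots> \<le> gram l X 0 1"
    using assms(1) X by (rule gram_first_row_le)
  also have "\<dots> \<le> (\<Sum>s\<in>{0<..<m}. gram l X 0 s)"
    using assms gram_nonneg[OF X] by (intro member_le_sum) auto
  also have "\<dots> \<le> (\<Sum>r<m. \<Sum>s\<in>{r<..<m}. gram l X r s)"
    using assms gram_nonneg[OF X]
    by (intro member_le_sum[where f = "\<lambda>r. \<Sum>s\<in>{r<..<m}. gram l X r s"] sum_nonneg) auto
  finally show ?thesis .
qed

lemma cont_at_PP_rho1:
  assumes "A \<in> Pset l m" "B \<in> Pset l m" "m11 l m A B + m10 l m A B \<noteq> 0"
  shows "cont_at_PP l m (rho1 l m) A B"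
  unfolding rho1_def using assms
  by (intro cont_at_PP_if_tendsto tendsto_divide tendsto_add tendsto_m11 tendsto_m10)

lemma cont_at_PP_rho2:
  assumes "A \<in> Pset l m" "B \<in> Pset l m" "m11 l m A B + m01 l m A B \<noteq> 0"
  shows "cont_at_PP l m (rho2 l m) A B"
  unfolding rho2_def using assms
  by (intro cont_at_PP_if_tendsto tendsto_divide tendsto_add tendsto_m11 tendsto_m01)

lemma cont_at_PP_rho3:
  assumes "1 < m" "A \<in> Pset l m" "B \<in> Pset l m"
  shows "cont_at_PP l m (rho3 l m) A B"
  unfolding rho3_def using assms
  by (intro cont_at_PP_if_tendsto tendsto_divide tendsto_add tendsto_const tendsto_m11 tendsto_m00)
     (auto simp: Npairs_def)

lemma cont_at_PP_rho4:
  assumes "A \<in> Pset l m" "B \<in> Pset l m"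
    and "0 < m11 l m A B + m10 l m A B" "0 < m11 l m A B + m01 l m A B"
  shows "cont_at_PP l m (rho4 l m) A B"
  unfolding rho4_def using assms
  by (intro cont_at_PP_if_tendsto tendsto_divide tendsto_real_sqrt tendsto_mult tendsto_add
      tendsto_m11 tendsto_m10 tendsto_m01) auto

lemma cont_at_PP_rho5:
  assumes "A \<in> Pset l m" "B \<in> Pset l m" "0 < m11 l m A B + m10 l m A B"
  shows "cont_at_PP l m (rho5 l m) A B"
  unfolding rho5_def using assms m01_nonneg[OF assms(1,2)]
  by (intro cont_at_PP_if_tendsto tendsto_divide tendsto_add tendsto_m11 tendsto_m10 tendsto_m01) auto

theorem proposition2:
  fixes l m :: nat
  assumes "1 \<le> l" and "l \<le> m" and "1 < m"
  shows "ae_cont_PP l m (rho1 l m) \<and> ae_cont_PP l m (rho2 l m) \<and> ae_cont_PP l m (rho3 l m)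
         \<and> ae_cont_PP l m (rho4 l m) \<and> ae_cont_PP l m (rho5 l m)
         \<and> (\<forall>A\<in>Pset l m. \<forall>B\<in>Pset l m. cont_at_PP l m (rho3 l m) A B)"
proof -
  have Pset: "orbit l X \<in> Pset l m" if "X \<in> Xset l m" for X
    using that by (simp add: Pset_def)
  have pos_10: "0 < m11 l m (orbit l X) (orbit l Y) + m10 l m (orbit l X) (orbit l Y)"
    if "X \<in> Xset l m" "X 0 0 \<noteq> 0" "X 0 1 \<noteq> 0" for X Y
    using upper_pair_sum_gram_pos[OF assms(1,3) that] by (simp add: m11_plus_m10 Cmat_orbit)
  have pos_01: "0 < m11 l m (orbit l X) (orbit l Y) + m01 l m (orbit l X) (orbit l Y)"
    if "Y \<in> Xset l m" "Y 0 0 \<noteq> 0" "Y 0 1 \<noteq> 0" for X Y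
    using upper_pair_sum_gram_pos[OF assms(1,3) that] by (simp add: m11_plus_m01 Cmat_orbit)
  show ?thesis
    using assms
    by (intro conjI ballI ae_cont_PP_if_first_row_nonzero cont_at_PP_rho1 cont_at_PP_rho2
        cont_at_PP_rho3 cont_at_PP_rho4 cont_at_PP_rho5 Pset pos_10 pos_01
        pos_10[THEN less_imp_neq, symmetric] pos_01[THEN less_imp_neq, symmetric]) auto
qed

end
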